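(* For every $k\ge1$, the number of $\tau\in\mathcal{S}_k$ with $\mathcal{J}(\tau)=\{0,1,\ldots,k\}$ equals $2^{k-1}$.
   Context: The pattern of a word of $j$ distinct letters is its order-preserving relabeling by $\{1,\ldots,j\}$; the length-$j$ initial pattern of $\tau$ is the pattern of $\tau_1\ldots\tau_j$. The $j$-set $\mathcal{J}(\tau)$ of $\tau\in\mathcal{S}_k$ is the set consisting of $0$ together with all $j\in\{1,\ldots,k\}$ such that the length-$j$ initial pattern of $\tau$ is an involution in $\mathcal{S}_j$. *)

theory Defs
  imports "HOL-Combinatorics.Permutations"
begin

text \<open>Permutations of S_k are functions nat to nat permuting {1..k} (one-line notation
  tau 1, ..., tau k).  The pattern of the word tau 1 ... tau j of distinct letters is its
  order-preserving relabeling by {1..j}: position i gets the rank of tau i among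
  tau 1, ..., tau j.\<close>

definition initial_pattern :: "(nat \<Rightarrow> nat) \<Rightarrow> nat \<Rightarrow> nat \<Rightarrow> nat" where
  "initial_pattern \<tau> j = (\<lambda>i. if i \<in> {1..j} then card {l \<in> {1..j}. \<tau> l \<le> \<tau> i} else i)"

definition is_involution_on :: "nat set \<Rightarrow> (nat \<Rightarrow> nat) \<Rightarrow> bool" where
  "is_involution_on A \<sigma> \<longleftrightarrow> \<sigma> permutes A \<and> (\<forall>i\<in>A. \<sigma> (\<sigma> i) = i)"

definition jset :: "nat \<Rightarrow> (nat \<Rightarrow> nat) \<Rightarrow> nat set" where
  "jset k \<tau> = {0} \<union> {j \<in> {1..k}. is_involution_on {1..j} (initial_pattern \<tau> j)}"

end

theory Submission
  imports Defs
begin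

text \<open>Suppose every initial pattern of \<open>\<tau> \<in> S\<^sub>k\<close> is an involution and let \<open>m = \<tau>(k)\<close>, so
  \<open>\<tau>(m) = k\<close>. The letter \<open>\<tau>(m)\<close> is maximal, so it has rank \<open>j\<close> in every prefix of length
  \<open>j \<ge> m\<close>; as these patterns are involutions, \<open>\<tau>(j)\<close> has rank \<open>m\<close> in all of them. A letter
  that is not smaller than some earlier one in this range would have a strictly larger rank, so
  \<open>\<tau>\<close> decreases on \<open>{m..k}\<close>, i.e. \<open>\<tau> = \<sigma> \<oplus> (k-m+1, \<dots>, 2, 1)\<close> with \<open>\<sigma> \<in> S\<^sub>m\<^sub>-\<^sub>1\<close> of the
  same kind. Conversely all such direct sums qualify, so the numbers \<open>c\<^sub>k\<close> of these permutations
  satisfy \<open>c\<^sub>0 = 1\<close> and \<open>c\<^sub>k = c\<^sub>0 + \<dots> + c\<^sub>k\<^sub>-\<^sub>1\<close>, whence \<open>c\<^sub>k = 2\<^sup>k\<^sup>-\<^sup>1\<close>.\<close>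

definition prefix_rank :: "(nat \<Rightarrow> nat) \<Rightarrow> nat \<Rightarrow> nat \<Rightarrow> nat" where
  "prefix_rank \<tau> j i = card {l \<in> {1..j}. \<tau> l \<le> \<tau> i}"

definition prefix_involutive :: "nat \<Rightarrow> (nat \<Rightarrow> nat) \<Rightarrow> bool" where
  "prefix_involutive k \<tau> \<longleftrightarrow>
     (\<forall>j\<in>{1..k}. \<forall>i\<in>{1..j}. prefix_rank \<tau> j (prefix_rank \<tau> j i) = i)"

definition prefix_involutive_perms :: "nat \<Rightarrow> (nat \<Rightarrow> nat) set" where
  "prefix_involutive_perms k = {\<tau>. \<tau> permutes {1..k} \<and> prefix_involutive k \<tau>}"

lemma prefix_rank_in:
  assumes "i \<in> {1..j}"
  shows "prefix_rank \<tau> j i \<in> {1..j}"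
proof -
  let ?S = "{l \<in> {1..j}. \<tau> l \<le> \<tau> i}"
  have "card ?S \<le> card {1..j}" by (rule card_mono) auto
  then have "card ?S \<le> j" by simp
  moreover have "i \<in> ?S" using assms by simp
  then have "card ?S \<noteq> 0" by auto
  ultimately show ?thesis unfolding prefix_rank_def atLeastAtMost_iff by linarith
qed

lemma prefix_rank_permutes:
  assumes perm: "\<tau> permutes {1..j}" and i: "i \<in> {1..j}"
  shows "prefix_rank \<tau> j i = \<tau> i"
proof -
  let ?S = "{l \<in> {1..j}. \<tau> l \<le> \<tau> i}"
  have "\<tau> ` ?S = {v \<in> \<tau> ` {1..j}. v \<le> \<tau> i}" by auto
  also have "\<dots> = {1..\<tau> i}"
    using permutes_image[OF perm] permutes_in_image[OF perm, of i] i by auto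
  finally have "card (\<tau> ` ?S) = \<tau> i" by simp
  moreover have "inj_on \<tau> ?S" using permutes_inj_on[OF perm] by blast
  ultimately show ?thesis unfolding prefix_rank_def by (simp add: card_image)
qed

lemma prefix_rank_cong:
  assumes "\<forall>l\<in>{1..j}. \<tau> l = \<tau>' l" and "i \<in> {1..j}"
  shows "prefix_rank \<tau> j i = prefix_rank \<tau>' j i"
  unfolding prefix_rank_def using assms by (metis (no_types, lifting))

lemma prefix_rank_self_less:
  assumes "i < j" and "\<tau> i \<le> \<tau> j"
  shows "prefix_rank \<tau> i i < prefix_rank \<tau> j j"
proof -
  have "{l \<in> {1..i}. \<tau> l \<le> \<tau> i} \<subseteq> {l \<in> {1..j}. \<tau> l \<le> \<tau> j}"
    using assms by auto
  moreover have "j \<in> {l \<in> {1..j}. \<tau> l \<le> \<tau> j} - {l \<in> {1..i}. \<tau> l \<le> \<tau> i}"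
    using assms by auto
  ultimately have "{l \<in> {1..i}. \<tau> l \<le> \<tau> i} \<subset> {l \<in> {1..j}. \<tau> l \<le> \<tau> j}"
    by blast
  then show ?thesis unfolding prefix_rank_def by (rule psubset_card_mono[rotated]) simp
qed

lemma involution_permutes:
  assumes "\<And>x. x \<notin> A \<Longrightarrow> f x = x" and "\<And>x. x \<in> A \<Longrightarrow> f x \<in> A \<and> f (f x) = x"
  shows "f permutes A"
proof (rule bij_imp_permutes)
  show "bij_betw f A A" by (rule bij_betw_byWitness[where f' = f]) (use assms(2) in auto)
qed (use assms(1) in auto)

lemma is_involution_on_iff:
  assumes "\<And>x. x \<notin> A \<Longrightarrow> f x = x"
  shows "is_involution_on A f \<longleftrightarrow> (\<forall>x\<in>A. f x \<in> A \<and> f (f x) = x)"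
  unfolding is_involution_on_def using assms involution_permutes permutes_in_image by metis

lemma jset_eq_iff_prefix_involutive:
  "jset k \<tau> = {0..k} \<longleftrightarrow> prefix_involutive k \<tau>"
proof -
  have "is_involution_on {1..j} (initial_pattern \<tau> j) \<longleftrightarrow>
          (\<forall>i\<in>{1..j}. prefix_rank \<tau> j (prefix_rank \<tau> j i) = i)" for j
  proof -
    have pattern: "initial_pattern \<tau> j = (\<lambda>i. if i \<in> {1..j} then prefix_rank \<tau> j i else i)"
      unfolding initial_pattern_def prefix_rank_def ..
    have "\<forall>i\<in>{1..j}. prefix_rank \<tau> j i \<in> {1..j}" using prefix_rank_in by blast
    then show ?thesis unfolding pattern by (subst is_involution_on_iff) auto
  qed
  then have jset_eq: "jset k \<tau> = {0} \<union> {j \<in> {1..k}. \<forall>i\<in>{1..j}. prefix_rank \<tau> j (prefix_rank \<tau> j i) = i}"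
    unfolding jset_def by simp
  show ?thesis
  proof
    assume full: "jset k \<tau> = {0..k}"
    show "prefix_involutive k \<tau>" unfolding prefix_involutive_def
    proof
      fix j assume "j \<in> {1..k}"
      then have "j \<in> jset k \<tau>" "j \<noteq> 0" using full by auto
      then show "\<forall>i\<in>{1..j}. prefix_rank \<tau> j (prefix_rank \<tau> j i) = i" unfolding jset_eq by blast
    qed
  qed (auto simp: jset_eq prefix_involutive_def)
qed

lemma prefix_involutive_mono: "prefix_involutive k \<tau> \<Longrightarrow> j \<le> k \<Longrightarrow> prefix_involutive j \<tau>"
  unfolding prefix_involutive_def by auto

lemma prefix_involutive_cong:
  assumes "\<forall>l\<in>{1..k}. \<tau> l = \<tau>' l" and "prefix_involutive k \<tau>"
  shows "prefix_involutive k \<tau>'"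
  unfolding prefix_involutive_def
proof (intro ballI)
  fix j i assume j: "j \<in> {1..k}" and i: "i \<in> {1..j}"
  have agree: "\<forall>l\<in>{1..j}. \<tau> l = \<tau>' l" using assms(1) j by auto
  have "prefix_rank \<tau> j (prefix_rank \<tau> j i) = i"
    using assms(2) j i unfolding prefix_involutive_def by blast
  then show "prefix_rank \<tau>' j (prefix_rank \<tau>' j i) = i"
    using prefix_rank_cong[OF agree] prefix_rank_in[OF i] i by metis
qed

lemma prefix_involutive_involution:
  assumes "\<tau> permutes {1..k}" and "prefix_involutive k \<tau>" and "i \<in> {1..k}"
  shows "\<tau> (\<tau> i) = i"
proof -
  have "prefix_rank \<tau> k (prefix_rank \<tau> k i) = i"
    using assms(2,3) unfolding prefix_involutive_def by auto
  moreover have "\<tau> i \<in> {1..k}" using permutes_in_image[OF assms(1)] assms(3) by blast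
  ultimately show ?thesis using prefix_rank_permutes[OF assms(1)] assms(3) by simp
qed

definition extend_decreasing :: "nat \<Rightarrow> nat \<Rightarrow> (nat \<Rightarrow> nat) \<Rightarrow> nat \<Rightarrow> nat" where
  "extend_decreasing n k \<sigma> = (\<lambda>x. if x \<le> n then \<sigma> x else if x \<le> k then k + n + 1 - x else x)"

lemma prefix_rank_extend_decreasing:
  assumes perm: "\<sigma> permutes {1..n}" and j: "n < j" "j \<le> k" and i: "i \<in> {1..j}"
  shows "prefix_rank (extend_decreasing n k \<sigma>) j i = (if i \<le> n then \<sigma> i else n + j + 1 - i)"
proof -
  let ?\<tau> = "extend_decreasing n k \<sigma>"
  have small: "\<sigma> l \<in> {1..n}" if "l \<in> {1..n}" for l
    using permutes_in_image[OF perm] that by blast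
  show ?thesis
  proof (cases "i \<le> n")
    case True
    have "l \<in> {1..j} \<and> ?\<tau> l \<le> ?\<tau> i \<longleftrightarrow> l \<in> {1..n} \<and> \<sigma> l \<le> \<sigma> i" for l
    proof (cases "l \<le> n")
      case False
      then have "l \<le> j \<Longrightarrow> ?\<tau> i < ?\<tau> l"
        using small[of i] True i j by (simp add: extend_decreasing_def; arith)
      then show ?thesis using False by auto
    qed (use True j in \<open>auto simp: extend_decreasing_def\<close>)
    then have "{l \<in> {1..j}. ?\<tau> l \<le> ?\<tau> i} = {l \<in> {1..n}. \<sigma> l \<le> \<sigma> i}" by blast
    then have "prefix_rank ?\<tau> j i = prefix_rank \<sigma> n i" unfolding prefix_rank_def by simp
    then show ?thesis using prefix_rank_permutes[OF perm] True i by simp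
  next
    case False
    have "l \<in> {1..j} \<and> ?\<tau> l \<le> ?\<tau> i \<longleftrightarrow> l \<in> {1..n} \<union> {i..j}" for l
    proof (cases "l \<le> n")
      case True
      then have "l \<in> {1..n} \<Longrightarrow> ?\<tau> l < ?\<tau> i"
        using small[of l] False i j by (simp add: extend_decreasing_def; arith)
      then show ?thesis using True False i by auto
    next
      case l: False
      then have "l \<le> j \<Longrightarrow> ?\<tau> l \<le> ?\<tau> i \<longleftrightarrow> i \<le> l"
        using False i j by (simp add: extend_decreasing_def; arith)
      then show ?thesis using l False by auto
    qed
    then have "{l \<in> {1..j}. ?\<tau> l \<le> ?\<tau> i} = {1..n} \<union> {i..j}" by blast
    moreover have "card ({1..n} \<union> {i..j}) = n + (j + 1 - i)"
      using False by (subst card_Un_disjoint) auto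
    ultimately have "prefix_rank ?\<tau> j i = n + (j + 1 - i)" unfolding prefix_rank_def by argo
    then show ?thesis using False i by auto
  qed
qed

lemma extend_decreasing_in_perms:
  assumes \<sigma>: "\<sigma> \<in> prefix_involutive_perms n" and "n < k"
  shows "extend_decreasing n k \<sigma> \<in> prefix_involutive_perms k"
proof -
  let ?\<tau> = "extend_decreasing n k \<sigma>"
  have perm: "\<sigma> permutes {1..n}" and inv: "prefix_involutive n \<sigma>"
    using \<sigma> unfolding prefix_involutive_perms_def by auto
  have small: "\<sigma> l \<in> {1..n} \<and> \<sigma> (\<sigma> l) = l" if "l \<in> {1..n}" for l
    using permutes_in_image[OF perm] prefix_involutive_involution[OF perm inv] that by blast
  have "?\<tau> permutes {1..k}"
  proof (rule involution_permutes)
    fix x assume "x \<notin> {1..k}"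
    then have "x = 0 \<or> k < x" by auto
    then show "?\<tau> x = x"
      using permutes_not_in[OF perm, of 0] \<open>n < k\<close> by (auto simp: extend_decreasing_def)
  next
    fix x assume x: "x \<in> {1..k}"
    show "?\<tau> x \<in> {1..k} \<and> ?\<tau> (?\<tau> x) = x"
    proof (cases "x \<le> n")
      case True
      then show ?thesis using small[of x] x \<open>n < k\<close> by (auto simp: extend_decreasing_def)
    qed (use x in \<open>auto simp: extend_decreasing_def\<close>)
  qed
  moreover have "prefix_involutive k ?\<tau>"
    unfolding prefix_involutive_def
  proof (intro ballI)
    fix j i assume j: "j \<in> {1..k}" and i: "i \<in> {1..j}"
    show "prefix_rank ?\<tau> j (prefix_rank ?\<tau> j i) = i"
    proof (cases "j \<le> n")
      case True
      have "\<forall>l\<in>{1..j}. \<sigma> l = ?\<tau> l" using True by (simp add: extend_decreasing_def)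
      moreover have "prefix_involutive j \<sigma>" using prefix_involutive_mono[OF inv True] .
      ultimately have "prefix_involutive j ?\<tau>" by (rule prefix_involutive_cong)
      then show ?thesis using i unfolding prefix_involutive_def by auto
    next
      case False
      then have j': "n < j" "j \<le> k" using j by auto
      note rank = prefix_rank_extend_decreasing[OF perm j']
      show ?thesis
      proof (cases "i \<le> n")
        case True
        then show ?thesis using rank[of i] rank[of "\<sigma> i"] small[of i] i j' by simp
      next
        case False
        moreover have "n + j + 1 - i \<in> {1..j}" "\<not> n + j + 1 - i \<le> n" using False i by auto
        ultimately show ?thesis using rank[of i] rank[of "n + j + 1 - i"] i by auto
      qed
    qed
  qed
  ultimately show ?thesis unfolding prefix_involutive_perms_def by blast
qed

lemma strictly_decreasing_diff:
  fixes f :: "nat \<Rightarrow> nat"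
  assumes "\<And>a b. i \<le> a \<Longrightarrow> a < b \<Longrightarrow> b \<le> j \<Longrightarrow> f b < f a" and "i \<le> j"
  shows "f j + (j - i) \<le> f i"
  using assms(2)
proof (induction j rule: dec_induct)
  case (step j)
  then have "f (Suc j) < f j" using assms(1) by simp
  with step.IH show ?case using step.hyps by simp
qed simp

lemma prefix_involutive_perm_tail:
  assumes \<tau>: "\<tau> \<in> prefix_involutive_perms k" and "1 \<le> k" and i: "i \<in> {\<tau> k..k}"
  shows "\<tau> i = k + \<tau> k - i"
proof -
  define m where "m = \<tau> k"
  have perm: "\<tau> permutes {1..k}" and inv: "prefix_involutive k \<tau>"
    using \<tau> unfolding prefix_involutive_perms_def by auto
  have range_in: "\<tau> l \<in> {1..k}" if "l \<in> {1..k}" for l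
    using permutes_in_image[OF perm] that by blast
  have m: "m \<in> {1..k}" "\<tau> m = k"
    using range_in[of k] prefix_involutive_involution[OF perm inv, of k] \<open>1 \<le> k\<close>
    by (auto simp: m_def)
  have last_rank: "prefix_rank \<tau> j j = m" if "m \<le> j" "j \<le> k" for j
  proof -
    have "{l \<in> {1..j}. \<tau> l \<le> \<tau> m} = {1..j}" using range_in m that by auto
    then have "prefix_rank \<tau> j m = j" unfolding prefix_rank_def by simp
    moreover have "prefix_rank \<tau> j (prefix_rank \<tau> j m) = m"
      using inv m that unfolding prefix_involutive_def by auto
    ultimately show ?thesis by simp
  qed
  have decreasing: "\<tau> b < \<tau> a" if "m \<le> a" "a < b" "b \<le> k" for a b
    using prefix_rank_self_less[of a b \<tau>] last_rank that by fastforce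
  have "\<tau> k + (k - i) \<le> \<tau> i" "\<tau> i + (i - m) \<le> \<tau> m"
    using strictly_decreasing_diff[of _ _ \<tau>] decreasing i by (auto simp: m_def)
  then show ?thesis using m i by (simp add: m_def)
qed

lemma prefix_involutive_perm_decompose:
  assumes \<tau>: "\<tau> \<in> prefix_involutive_perms k" and k: "1 \<le> k"
  obtains n \<sigma> where "n < k" "\<sigma> \<in> prefix_involutive_perms n" "\<tau> = extend_decreasing n k \<sigma>"
proof
  define n where "n = \<tau> k - 1"
  define \<sigma> where "\<sigma> = (\<lambda>x. if x \<le> n then \<tau> x else x)"
  have perm: "\<tau> permutes {1..k}" and inv: "prefix_involutive k \<tau>"
    using \<tau> unfolding prefix_involutive_perms_def by auto
  have "\<tau> k \<in> {1..k}" using permutes_in_image[OF perm] k by simp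
  then have n: "n < k" "\<tau> k = n + 1" unfolding n_def by auto
  have tail: "\<tau> x = k + n + 1 - x" if "n < x" "x \<le> k" for x
    using prefix_involutive_perm_tail[OF \<tau> k, of x] n that by simp
  have head: "\<tau> l \<in> {1..n} \<and> \<tau> (\<tau> l) = l" if l: "l \<in> {1..n}" for l
  proof -
    have "\<tau> l \<in> {1..k}" "\<tau> (\<tau> l) = l"
      using permutes_in_image[OF perm] prefix_involutive_involution[OF perm inv] l n by auto
    moreover have "\<tau> l \<le> n"
    proof (rule ccontr)
      assume "\<not> \<tau> l \<le> n"
      then have "\<tau> (\<tau> l) > n" using tail[of "\<tau> l"] \<open>\<tau> l \<in> {1..k}\<close> by auto
      then show False using \<open>\<tau> (\<tau> l) = l\<close> l by simp
    qed
    ultimately show ?thesis by simp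
  qed
  have "\<sigma> permutes {1..n}"
  proof (rule involution_permutes)
    fix x assume "x \<notin> {1..n}"
    then have "x = 0 \<or> n < x" by auto
    then show "\<sigma> x = x" using permutes_not_in[OF perm, of 0] by (auto simp: \<sigma>_def)
  qed (use head in \<open>auto simp: \<sigma>_def\<close>)
  moreover have "prefix_involutive n \<sigma>"
    by (rule prefix_involutive_cong[OF _ prefix_involutive_mono[OF inv]]) (use n in \<open>auto simp: \<sigma>_def\<close>)
  ultimately show "\<sigma> \<in> prefix_involutive_perms n" unfolding prefix_involutive_perms_def by blast
  show "\<tau> = extend_decreasing n k \<sigma>"
    using tail permutes_not_in[OF perm] by (auto simp: extend_decreasing_def \<sigma>_def)
  show "n < k" using n by simp
qed

lemma finite_prefix_involutive_perms: "finite (prefix_involutive_perms k)"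
  unfolding prefix_involutive_perms_def
  by (rule finite_subset[OF _ finite_permutations[of "{1..k}"]]) auto

lemma prefix_involutive_perms_0: "prefix_involutive_perms 0 = {id}"
  by (simp add: prefix_involutive_perms_def prefix_involutive_def)

lemma prefix_involutive_perms_eq_UNION:
  assumes "1 \<le> k"
  shows "prefix_involutive_perms k = (\<Union>n<k. extend_decreasing n k ` prefix_involutive_perms n)"
proof (intro equalityI subsetI)
  fix \<tau> assume "\<tau> \<in> prefix_involutive_perms k"
  then obtain n \<sigma> where "n < k" "\<sigma> \<in> prefix_involutive_perms n" "\<tau> = extend_decreasing n k \<sigma>"
    using prefix_involutive_perm_decompose assms by blast
  then show "\<tau> \<in> (\<Union>n<k. extend_decreasing n k ` prefix_involutive_perms n)" by blast
qed (use extend_decreasing_in_perms in auto)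

lemma inj_on_extend_decreasing: "inj_on (extend_decreasing n k) (prefix_involutive_perms n)"
proof (rule inj_onI)
  fix \<sigma> \<sigma>' assume "\<sigma> \<in> prefix_involutive_perms n" "\<sigma>' \<in> prefix_involutive_perms n"
    and eq: "extend_decreasing n k \<sigma> = extend_decreasing n k \<sigma>'"
  then have "\<sigma> permutes {1..n}" "\<sigma>' permutes {1..n}" unfolding prefix_involutive_perms_def by auto
  show "\<sigma> = \<sigma>'"
  proof
    fix x
    show "\<sigma> x = \<sigma>' x"
    proof (cases "x \<le> n")
      case True
      then show ?thesis using fun_cong[OF eq, of x] by (simp add: extend_decreasing_def)
    next
      case False
      then show ?thesis
        using permutes_not_in[OF \<open>\<sigma> permutes {1..n}\<close>] permutes_not_in[OF \<open>\<sigma>' permutes {1..n}\<close>] by simp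
    qed
  qed
qed

lemma card_prefix_involutive_perms_rec:
  assumes "1 \<le> k"
  shows "card (prefix_involutive_perms k) = (\<Sum>n<k. card (prefix_involutive_perms n))"
proof -
  have at_k: "\<forall>\<tau> \<in> extend_decreasing n k ` prefix_involutive_perms n. \<tau> k = n + 1" if "n < k" for n
    using that by (auto simp: extend_decreasing_def)
  have disjoint: "extend_decreasing n k ` prefix_involutive_perms n \<inter>
      extend_decreasing n' k ` prefix_involutive_perms n' = {}" if "n < k" "n' < k" "n \<noteq> n'" for n n'
    unfolding disjoint_iff using at_k[OF that(1)] at_k[OF that(2)] that(3) by (metis add_right_cancel)
  show ?thesis
    unfolding prefix_involutive_perms_eq_UNION[OF assms]
    by (subst card_UN_disjoint)
      (auto simp: disjoint finite_prefix_involutive_perms card_image[OF inj_on_extend_decreasing])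
qed

lemma card_prefix_involutive_perms: "card (prefix_involutive_perms (Suc n)) = 2 ^ n"
proof (induction n)
  case 0
  show ?case by (simp add: card_prefix_involutive_perms_rec prefix_involutive_perms_0)
next
  case (Suc n)
  have "card (prefix_involutive_perms (Suc (Suc n))) =
      (\<Sum>m<Suc n. card (prefix_involutive_perms m)) + card (prefix_involutive_perms (Suc n))"
    by (simp add: card_prefix_involutive_perms_rec)
  also have "\<dots> = 2 * card (prefix_involutive_perms (Suc n))"
    by (simp add: card_prefix_involutive_perms_rec[of "Suc n"])
  finally show ?case using Suc.IH by simp
qed

theorem mainTheorem9:
  fixes k :: nat
  assumes "k \<ge> 1"
  shows "card {\<tau>. \<tau> permutes {1..k} \<and> jset k \<tau> = {0..k}} = 2 ^ (k - 1)"
proof -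
  have "{\<tau>. \<tau> permutes {1..k} \<and> jset k \<tau> = {0..k}} = prefix_involutive_perms k"
    unfolding prefix_involutive_perms_def jset_eq_iff_prefix_involutive ..
  moreover obtain n where "k = Suc n" using assms by (cases k) auto
  ultimately show ?thesis using card_prefix_involutive_perms by simp
qed

end
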